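(* Let $q>1$ be a prime number and $0<j\le q$. Then: (1) $\bar{\mathsf{L}}^j_q$ is strongly maximal with respect to $\mathsf{CPL}$, and its consequence relation is the least structural finitary consequence relation extending $\vDash_{\mathsf{L}^j_q}$ that validates the rule $j(\varphi\wedge\neg\varphi)/(\psi\vee\neg\psi)^q$ (for all formulas $\varphi,\psi$); (2) $\mathsf{L}^j_q$ is strongly maximal with respect to $\bar{\mathsf{L}}^j_q$.
   Context: $\mathbf{ŁV}_{n+1}=(\{0,\frac1n,\dots,1\},\neg,\to)$ with $\neg x=1-x$, $x\to y=\min\{1,1-x+y\}$; derived: $x\oplus y=\neg x\to y$, $x\otimes y=\neg(x\to\neg y)$, $x\vee y=(x\to y)\to y$, $x\wedge y=\neg(\neg x\vee\neg y)$; $j\alpha$ is $\alpha\oplus\cdots\oplus\alpha$ ($j$ times) and $\alpha^q$ is $\alpha\otimes\cdots\otimes\alpha$ ($q$ times). $F_{j/q}=\{x:x\ge j/q\}$; $\mathsf{L}^j_q=\langle\mathbf{ŁV}_{q+1},F_{j/q}\rangle$; $\bar{\mathsf{L}}^j_q=\langle\mathbf{ŁV}_{q+1}\times\mathbf{ŁV}_2,F_{j/q}\times\{1\}\rangle$; $\mathsf{CPL}=\langle\mathbf{ŁV}_2,\{1\}\rangle$ over $\{\neg,\to\}$. Matrix consequence: every evaluation sending the premises into the designated set sends the conclusion into it. $L_1$ is strongly maximal w.r.t. $L_2$ if ${\vdash_{L_1}}\subsetneq{\vdash_{L_2}}$ and for every finitary rule $\varphi_1,\dots,\varphi_k/\psi$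 with $\varphi_1,\dots,\varphi_k\vdash_{L_2}\psi$ but $\varphi_1,\dots,\varphi_k\nvdash_{L_1}\psi$, the least consequence relation extending $\vdash_{L_1}$ in which $\sigma(\varphi_1),\dots,\sigma(\varphi_k)\vdash\sigma(\psi)$ for all substitutions $\sigma$ coincides with $\vdash_{L_2}$. *)

theory Defs
  imports Complex_Main "HOL-Computational_Algebra.Primes"
begin

datatype fm = Var nat | Neg fm | Imp fm fm

definition Oplus :: "fm \<Rightarrow> fm \<Rightarrow> fm" where "Oplus a b = Imp (Neg a) b"
definition Otimes :: "fm \<Rightarrow> fm \<Rightarrow> fm" where "Otimes a b = Neg (Imp a (Neg b))"
definition Vee :: "fm \<Rightarrow> fm \<Rightarrow> fm" where "Vee a b = Imp (Imp a b) b"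
definition Wedge :: "fm \<Rightarrow> fm \<Rightarrow> fm" where "Wedge a b = Neg (Vee (Neg a) (Neg b))"

text \<open>j a = a oplus ... oplus a (j times), a^q = a otimes ... otimes a (q times);
  only used for j, q >= 1 (the 0 clause is an irrelevant default).\<close>
fun nmul :: "nat \<Rightarrow> fm \<Rightarrow> fm" where
  "nmul 0 a = a"
| "nmul (Suc 0) a = a"
| "nmul (Suc (Suc n)) a = Oplus (nmul (Suc n) a) a"

fun npow :: "nat \<Rightarrow> fm \<Rightarrow> fm" where
  "npow 0 a = a"
| "npow (Suc 0) a = a"
| "npow (Suc (Suc n)) a = Otimes (npow (Suc n) a) a"

fun subst :: "(nat \<Rightarrow> fm) \<Rightarrow> fm \<Rightarrow> fm" where
  "subst \<sigma> (Var n) = \<sigma> n"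
| "subst \<sigma> (Neg a) = Neg (subst \<sigma> a)"
| "subst \<sigma> (Imp a b) = Imp (subst \<sigma> a) (subst \<sigma> b)"

record 'a matrix =
  car :: "'a set"
  mneg :: "'a \<Rightarrow> 'a"
  mimp :: "'a \<Rightarrow> 'a \<Rightarrow> 'a"
  des :: "'a set"

fun eval :: "'a matrix \<Rightarrow> (nat \<Rightarrow> 'a) \<Rightarrow> fm \<Rightarrow> 'a" where
  "eval M v (Var n) = v n"
| "eval M v (Neg a) = mneg M (eval M v a)"
| "eval M v (Imp a b) = mimp M (eval M v a) (eval M v b)"

definition mcons :: "'a matrix \<Rightarrow> fm set \<Rightarrow> fm \<Rightarrow> bool" where
  "mcons M \<Gamma> \<phi> \<longleftrightarrow>
     (\<forall>v. (\<forall>n. v n \<in> car M) \<longrightarrow> (\<forall>\<gamma>\<in>\<Gamma>. eval M v \<gamma> \<in> des M) \<longrightarrow> eval M v \<phi> \<in> des M)"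

definition LV :: "nat \<Rightarrow> real set" where
  "LV n = {real k / real n | k. k \<le> n}"   \<comment> \<open>universe of LV_{n+1}\<close>

definition luk_neg :: "real \<Rightarrow> real" where "luk_neg x = 1 - x"
definition luk_imp :: "real \<Rightarrow> real \<Rightarrow> real" where "luk_imp x y = min 1 (1 - x + y)"

definition Lm :: "nat \<Rightarrow> nat \<Rightarrow> real matrix" where
  "Lm j q = \<lparr> car = LV q, mneg = luk_neg, mimp = luk_imp,
             des = {x \<in> LV q. x \<ge> real j / real q} \<rparr>"

definition Lbar :: "nat \<Rightarrow> nat \<Rightarrow> (real \<times> real) matrix" where
  "Lbar j q = \<lparr> car = LV q \<times> LV 1,
               mneg = (\<lambda>(x, y). (luk_neg x, luk_neg y)),
               mimp = (\<lambda>(x, y) (x', y'). (luk_imp x x', luk_imp y y')),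
               des = {x \<in> LV q. x \<ge> real j / real q} \<times> {1} \<rparr>"

definition CPL :: "real matrix" where
  "CPL = \<lparr> car = LV 1, mneg = luk_neg, mimp = luk_imp, des = {1} \<rparr>"

definition cons_rel :: "(fm set \<Rightarrow> fm \<Rightarrow> bool) \<Rightarrow> bool" where
  "cons_rel C \<longleftrightarrow>
     (\<forall>\<Gamma> \<phi>. \<phi> \<in> \<Gamma> \<longrightarrow> C \<Gamma> \<phi>) \<and>
     (\<forall>\<Gamma> \<Delta> \<phi>. C \<Gamma> \<phi> \<longrightarrow> \<Gamma> \<subseteq> \<Delta> \<longrightarrow> C \<Delta> \<phi>) \<and>
     (\<forall>\<Gamma> \<Delta> \<phi>. (\<forall>\<delta>\<in>\<Delta>. C \<Gamma> \<delta>) \<longrightarrow> C (\<Gamma> \<union> \<Delta>) \<phi> \<longrightarrow> C \<Gamma> \<phi>)"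

definition least_ext :: "(fm set \<Rightarrow> fm \<Rightarrow> bool) \<Rightarrow> fm list \<Rightarrow> fm \<Rightarrow> fm set \<Rightarrow> fm \<Rightarrow> bool" where
  "least_ext R prems concl \<Gamma> \<phi> \<longleftrightarrow>
     (\<forall>C. cons_rel C \<longrightarrow> (\<forall>\<Delta> \<psi>. R \<Delta> \<psi> \<longrightarrow> C \<Delta> \<psi>) \<longrightarrow>
          (\<forall>\<sigma>. C (subst \<sigma> ` set prems) (subst \<sigma> concl)) \<longrightarrow> C \<Gamma> \<phi>)"

definition strongly_maximal :: "(fm set \<Rightarrow> fm \<Rightarrow> bool) \<Rightarrow> (fm set \<Rightarrow> fm \<Rightarrow> bool) \<Rightarrow> bool" where
  "strongly_maximal R1 R2 \<longleftrightarrow>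
     R1 < R2 \<and>
     (\<forall>prems concl. R2 (set prems) concl \<longrightarrow> \<not> R1 (set prems) concl \<longrightarrow>
        least_ext R1 prems concl = R2)"

end

theory Submission
  imports Defs "HOL-Number_Theory.Cong"
begin

text \<open>
  A valuation of \<open>Lbar j q\<close> is a valuation of \<open>Lm j q\<close> paired with a classical one, so
  \<open>\<Gamma> \<Turnstile> \<phi>\<close> holds in \<open>Lbar j q\<close> iff it holds in \<open>Lm j q\<close> or \<open>\<Gamma>\<close> is classically
  unsatisfiable. For prime q, Lukasiewicz terms define on \<open>LV q\<close> the crispness test
  \<open>(\<psi> \<or> \<not>\<psi>)\<^sup>q\<close> (1 on {0, 1}, 0 elsewhere) and a term that is 1/q exactly off {0, 1}: the least
  nonzero value of \<open>i k mod q\<close> is 1 when q is prime. Hence, by compactness, a classically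
  unsatisfiable \<open>\<Gamma>\<close> proves \<open>j(\<theta> \<and> \<not>\<theta>)\<close> in \<open>Lm j q\<close> for a \<open>\<theta>\<close> built from its variables;
  the rule then makes every variable crisp, and with all variables crisp the smaller logic
  already proves everything the larger one does. Conversely, a counter-model of a new rule can
  be coded into a substitution whose value depends only on whether one formula is crisp; that
  instance of the rule derives the crispness of every variable (from no premises for CPL, from
  \<open>j(\<theta> \<and> \<not>\<theta>)\<close> for \<open>Lbar j q\<close>), which is all that was missing.
\<close>

section \<open>Real-valued Lukasiewicz semantics\<close>

fun luk :: "(nat \<Rightarrow> real) \<Rightarrow> fm \<Rightarrow> real" where
  "luk v (Var n) = v n"
| "luk v (Neg a) = luk_neg (luk v a)"
| "luk v (Imp a b) = luk_imp (luk v a) (luk v b)"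

lemma eval_CPL: "eval CPL v \<phi> = luk v \<phi>"
  by (induction \<phi>) (auto simp: CPL_def)

lemma eval_Lm: "eval (Lm j q) v \<phi> = luk v \<phi>"
  by (induction \<phi>) (auto simp: Lm_def)

lemma eval_Lbar: "eval (Lbar j q) V \<phi> = (luk (fst \<circ> V) \<phi>, luk (snd \<circ> V) \<phi>)"
  by (induction \<phi>) (auto simp: Lbar_def split: prod.splits)

lemma luk_subst: "luk v (subst \<sigma> \<phi>) = luk (\<lambda>n. luk v (\<sigma> n)) \<phi>"
  by (induction \<phi>) auto

fun var_bound :: "fm \<Rightarrow> nat" where
  "var_bound (Var n) = Suc n"
| "var_bound (Neg a) = var_bound a"
| "var_bound (Imp a b) = max (var_bound a) (var_bound b)"

lemma luk_cong: "(\<And>i. i < var_bound \<phi> \<Longrightarrow> v i = v' i) \<Longrightarrow> luk v \<phi> = luk v' \<phi>"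
  by (induction \<phi>) auto

lemma luk_Oplus: "luk v (Oplus a b) = min 1 (luk v a + luk v b)"
  by (simp add: Oplus_def luk_imp_def luk_neg_def)

lemma luk_Otimes: "luk v (Otimes a b) = max 0 (luk v a + luk v b - 1)"
  by (simp add: Otimes_def luk_imp_def luk_neg_def min_def max_def)

definition Falsum :: fm where "Falsum = Neg (Imp (Var 0) (Var 0))"

lemma luk_Falsum [simp]: "luk v Falsum = 0"
  by (simp add: Falsum_def luk_imp_def luk_neg_def)

abbreviation Crisp :: "nat \<Rightarrow> fm \<Rightarrow> fm" where
  "Crisp n a \<equiv> npow n (Vee a (Neg a))"

abbreviation Contra :: "nat \<Rightarrow> fm \<Rightarrow> fm" where
  "Contra n a \<equiv> nmul n (Wedge a (Neg a))"

lemma subst_nmul: "subst \<sigma> (nmul n a) = nmul n (subst \<sigma> a)"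
  by (induction n a rule: nmul.induct) (auto simp: Oplus_def)

lemma subst_npow: "subst \<sigma> (npow n a) = npow n (subst \<sigma> a)"
  by (induction n a rule: npow.induct) (auto simp: Otimes_def)

lemma subst_Crisp: "subst \<sigma> (Crisp n a) = Crisp n (subst \<sigma> a)"
  by (simp add: subst_npow Vee_def)

lemma subst_Contra: "subst \<sigma> (Contra n a) = Contra n (subst \<sigma> a)"
  by (simp add: subst_nmul Wedge_def Vee_def)

lemma LV_iff: "x \<in> LV q \<longleftrightarrow> (\<exists>k\<le>q. x = real k / real q)"
  unfolding LV_def by auto

lemma LV_1: "LV 1 = {0, 1}"
  unfolding LV_def by (auto simp: le_Suc_eq)

lemma LV_unit: "0 < q \<Longrightarrow> x \<in> LV q \<Longrightarrow> 0 \<le> x \<and> x \<le> 1"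
  unfolding LV_def by auto

lemma zero_in_LV: "0 \<in> LV q"
  unfolding LV_iff by (auto intro: exI[of _ 0])

lemma one_in_LV: "0 < q \<Longrightarrow> 1 \<in> LV q"
  unfolding LV_iff by (auto intro: exI[of _ q])

lemma LV_1_subset: "0 < q \<Longrightarrow> LV 1 \<subseteq> LV q"
  unfolding LV_1 by (auto simp: zero_in_LV one_in_LV)

lemma inverse_in_LV: "0 < q \<Longrightarrow> 1 / real q \<in> LV q"
  unfolding LV_iff by (auto intro: exI[of _ 1])

lemma luk_neg_LV:
  assumes "0 < q" "x \<in> LV q"
  shows "luk_neg x \<in> LV q"
proof -
  obtain k where "k \<le> q" "x = real k / real q"
    using assms LV_iff by auto
  then have "luk_neg x = real (q - k) / real q"
    using assms by (simp add: luk_neg_def of_nat_diff field_simps)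
  then show ?thesis
    unfolding LV_iff by (intro exI[of _ "q - k"]) auto
qed

lemma luk_imp_LV:
  assumes "0 < q" "x \<in> LV q" "y \<in> LV q"
  shows "luk_imp x y \<in> LV q"
proof -
  obtain k l where k: "k \<le> q" "x = real k / real q" and l: "l \<le> q" "y = real l / real q"
    using assms LV_iff by auto
  show ?thesis
  proof (cases "k \<le> l")
    case True
    then have "luk_imp x y = 1"
      using k l assms by (simp add: luk_imp_def divide_right_mono)
    then show ?thesis
      using one_in_LV assms by simp
  next
    case False
    then have "luk_imp x y = real (q + l - k) / real q"
      unfolding k(2) l(2) using k l assms by (simp add: luk_imp_def of_nat_diff field_simps min_def)
    then show ?thesis
      unfolding LV_iff using False k l by (intro exI[of _ "q + l - k"]) auto
  qed
qed

lemma LV_nonbool_bounds: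
  assumes "0 < q" "x \<in> LV q" "x \<notin> {0, 1}"
  shows "1 / real q \<le> x" "x \<le> 1 - 1 / real q"
proof -
  obtain k where k: "k \<le> q" "x = real k / real q"
    using assms LV_iff by auto
  with assms have "1 \<le> k" "k + 1 \<le> q"
    by (auto simp: Suc_le_eq le_less)
  then show "1 / real q \<le> x" "x \<le> 1 - 1 / real q"
    using k assms by (auto simp: field_simps)
qed

text \<open>Valuations into \<open>LV q\<close>; those of \<open>luk_val 1\<close> are the classical ones.\<close>

locale luk_val =
  fixes q :: nat and v :: "nat \<Rightarrow> real"
  assumes q_pos: "0 < q" and val_LV: "v n \<in> LV q"
begin

lemma luk_LV: "luk v \<phi> \<in> LV q"
  by (induction \<phi>) (auto simp: val_LV q_pos luk_neg_LV luk_imp_LV)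

lemma luk_unit: "0 \<le> luk v \<phi>" "luk v \<phi> \<le> 1"
  using LV_unit[OF q_pos luk_LV] by auto

lemma luk_Vee: "luk v (Vee a b) = max (luk v a) (luk v b)"
  using luk_unit[of a] luk_unit[of b]
  by (simp add: Vee_def luk_imp_def min_def max_def)

lemma luk_Wedge: "luk v (Wedge a b) = min (luk v a) (luk v b)"
  using luk_unit[of a] luk_unit[of b]
  by (simp add: Wedge_def Vee_def luk_imp_def luk_neg_def min_def max_def)

lemma luk_nmul: "1 \<le> n \<Longrightarrow> luk v (nmul n a) = min 1 (real n * luk v a)"
proof (induction n a rule: nmul.induct)
  case (3 n a)
  then show ?case
    using luk_unit[of a] by (cases n) (auto simp: luk_Oplus min_def algebra_simps)
qed (use luk_unit in auto)

lemma luk_npow: "1 \<le> n \<Longrightarrow> luk v (npow n a) = max 0 (real n * luk v a - (real n - 1))"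
proof (induction n a rule: npow.induct)
  case (3 n a)
  then show ?case
    using luk_unit[of a] by (cases n) (auto simp: luk_Otimes max_def algebra_simps)
qed (use luk_unit in auto)

lemma numerators:
  obtains m where "\<And>x. m x \<le> q" "\<And>x. v x = real (m x) / real q"
proof -
  have "\<forall>x. \<exists>k. k \<le> q \<and> v x = real k / real q"
    using val_LV LV_iff by blast
  then show ?thesis
    using that by (metis choice)
qed

lemma luk_Contra: "1 \<le> n \<Longrightarrow> luk v (Contra n a) = min 1 (real n * min (luk v a) (1 - luk v a))"
  by (simp add: luk_nmul luk_Wedge luk_neg_def)

text \<open>On LV q the q-th power detects the value 1: below 1 a value is at most 1 - 1/q.\<close>

lemma luk_npow_q: "luk v (npow q a) = (if luk v a = 1 then 1 else 0)"
proof -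
  have "real q * luk v a \<le> real q - 1" if "luk v a \<noteq> 1"
  proof -
    have "luk v a \<le> 1 - 1 / real q"
      using that LV_nonbool_bounds[OF q_pos luk_LV] q_pos by (cases "luk v a = 0") auto
    then show ?thesis
      using q_pos by (simp add: field_simps)
  qed
  then show ?thesis
    using q_pos by (auto simp: luk_npow max_def)
qed

lemma luk_Crisp: "luk v (Crisp q a) = (if luk v a \<in> {0, 1} then 1 else 0)"
proof -
  have "luk v (Vee a (Neg a)) = 1 \<longleftrightarrow> luk v a \<in> {0, 1}"
    using luk_unit[of a] by (auto simp: luk_Vee luk_neg_def max_def)
  then show ?thesis
    by (simp add: luk_npow_q)
qed

end

lemma luk_val_iff: "luk_val q v \<longleftrightarrow> 0 < q \<and> (\<forall>n. v n \<in> LV q)"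
  by (auto simp: luk_val_def)

lemma luk_val_bool_iff: "luk_val 1 w \<longleftrightarrow> (\<forall>n. w n \<in> {0, 1})"
  unfolding luk_val_iff LV_1 by simp

lemma luk_val_bool_mono: "luk_val 1 w \<Longrightarrow> 0 < q \<Longrightarrow> luk_val q w"
  using LV_1_subset by (auto simp: luk_val_iff)

lemma luk_val_bool: "luk_val 1 w \<Longrightarrow> luk w \<phi> \<in> {0, 1}"
  using luk_val.luk_LV LV_1 by blast

lemma luk_val_zero: "luk_val 1 (\<lambda>_. 0)"
  using luk_val_bool_iff by simp

section \<open>Term-definable functions on LV q\<close>

text \<open>Since \<open>(a \<oplus> b)\<^sup>q\<close> is 1 exactly when \<open>a + b \<ge> 1\<close>, \<open>Add_mod\<close> selects \<open>a \<oplus> b\<close> below 1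
  and \<open>a \<otimes> b = a + b - 1\<close> above.\<close>

definition Add_mod :: "nat \<Rightarrow> fm \<Rightarrow> fm \<Rightarrow> fm" where
  "Add_mod n a b =
     Vee (Wedge (Oplus a b) (Neg (npow n (Oplus a b)))) (Wedge (Otimes a b) (npow n (Oplus a b)))"

fun Mult_mod :: "nat \<Rightarrow> nat \<Rightarrow> fm \<Rightarrow> fm" where
  "Mult_mod n 0 a = Wedge a (Neg (npow n a))"
| "Mult_mod n (Suc m) a = Add_mod n (Mult_mod n m a) a"

fun Min_mult_mod :: "nat \<Rightarrow> nat \<Rightarrow> fm \<Rightarrow> fm" where
  "Min_mult_mod n 0 a = Mult_mod n 0 a"
| "Min_mult_mod n (Suc m) a = Wedge (Min_mult_mod n m a) (Mult_mod n (Suc m) a)"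

definition Nonbool :: "nat \<Rightarrow> fm \<Rightarrow> fm" where
  "Nonbool n a = Min_mult_mod n (n - 2) a"

text \<open>\<open>Falsum\<close> is needed for m = 0 because \<open>nmul 0 a = a\<close>.\<close>

definition Scaled_nonbool :: "nat \<Rightarrow> nat \<Rightarrow> fm \<Rightarrow> fm" where
  "Scaled_nonbool n m a = (if m = 0 then Falsum else nmul m (Nonbool n a))"

definition Switch :: "nat \<Rightarrow> nat \<Rightarrow> real \<Rightarrow> fm \<Rightarrow> fm" where
  "Switch n m b a =
     (if b = 1 then Vee (Scaled_nonbool n m a) (Crisp n a) else Scaled_nonbool n m a)"

fun Some_nonbool :: "nat \<Rightarrow> nat list \<Rightarrow> fm" where
  "Some_nonbool n [] = Falsum"
| "Some_nonbool n (x # xs) = Vee (Nonbool n (Var x)) (Some_nonbool n xs)"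

context luk_val
begin

lemma luk_Add_mod:
  assumes a: "luk v a = real A / real q" and b: "luk v b = real B / real q"
    and "A < q" "B \<le> q"
  shows "luk v (Add_mod q a b) = real ((A + B) mod q) / real q"
proof (cases "A + B < q")
  case True
  then have "luk v (Oplus a b) = real (A + B) / real q" "luk v (Oplus a b) \<noteq> 1"
    "luk v (Otimes a b) = 0"
    using q_pos by (simp_all add: luk_Oplus luk_Otimes a b add_divide_distrib[symmetric] field_simps)
  then show ?thesis
    using True luk_unit by (simp add: Add_mod_def luk_Vee luk_Wedge luk_npow_q luk_neg_def)
next
  case False
  then have "luk v (Oplus a b) = 1" "luk v (Otimes a b) = real (A + B - q) / real q"
    using q_pos by (simp_all add: luk_Oplus luk_Otimes a b of_nat_diff field_simps)
  moreover have "(A + B) mod q = A + B - q"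
    using False assms by (simp add: mod_if le_mod_geq)
  ultimately show ?thesis
    using luk_unit[of "Otimes a b"] by (simp add: Add_mod_def luk_Vee luk_Wedge luk_npow_q luk_neg_def)
qed

lemma luk_Mult_mod:
  assumes a: "luk v a = real k / real q" and "k \<le> q"
  shows "luk v (Mult_mod q m a) = real (Suc m * k mod q) / real q"
proof (induction m)
  case 0
  show ?case
  proof (cases "k = q")
    case True
    then show ?thesis
      using a q_pos by (simp add: luk_Wedge luk_npow_q luk_neg_def)
  next
    case False
    then have "k < q" "luk v a \<noteq> 1"
      using a \<open>k \<le> q\<close> q_pos by auto
    then show ?thesis
      using a luk_unit[of a] by (simp add: luk_Wedge luk_npow_q luk_neg_def)
  qed
next
  case (Suc m)
  then have "luk v (Mult_mod q (Suc m) a) = real ((Suc m * k mod q + k) mod q) / real q"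
    using luk_Add_mod a assms q_pos by simp
  also have "(Suc m * k mod q + k) mod q = Suc (Suc m) * k mod q"
    using mod_add_left_eq[of "Suc m * k" q k] by (simp add: add.commute add.left_commute)
  finally show ?case .
qed

lemma Min_mult_mod_le: "i \<le> m \<Longrightarrow> luk v (Min_mult_mod q m a) \<le> luk v (Mult_mod q i a)"
  by (induction m) (auto simp: luk_Wedge le_Suc_eq simp del: Mult_mod.simps)

lemma Min_mult_mod_ge:
  "(\<And>i. i \<le> m \<Longrightarrow> c \<le> luk v (Mult_mod q i a)) \<Longrightarrow> c \<le> luk v (Min_mult_mod q m a)"
  by (induction m) (auto simp: luk_Wedge simp del: Mult_mod.simps)

end

lemma prime_mod_inverse:
  fixes q k :: nat
  assumes "prime q" "0 < k" "k < q"
  shows "\<exists>m. 0 < m \<and> m < q \<and> m * k mod q = 1"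
proof -
  have "coprime k q"
    using assms by (metis coprime_commute dvd_imp_le not_le prime_imp_coprime)
  then obtain x where x: "[k * x = 1] (mod q)"
    using cong_solve_coprime_nat by auto
  have "x mod q * k mod q = k * x mod q"
    by (metis mod_mult_right_eq mult.commute)
  also have "\<dots> = 1"
    using x prime_gt_1_nat[OF \<open>prime q\<close>] unfolding cong_def by simp
  finally have "x mod q * k mod q = 1" .
  moreover from this have "x mod q \<noteq> 0"
    by (metis mod_0 mult_zero_left zero_neq_one)
  ultimately show ?thesis
    using assms by (intro exI[of _ "x mod q"]) auto
qed

locale luk_val_prime = luk_val +
  assumes prime_q: "prime q"
begin

text \<open>For a = k/q with 0 < k < q, the multiples (i+1) k mod q (i \<le> q - 2) are nonzero since q is
  prime, and one of them is 1 since k is invertible mod q; their minimum is therefore 1/q.\<close>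

lemma luk_Nonbool: "luk v (Nonbool q a) = (if luk v a \<in> {0, 1} then 0 else 1 / real q)"
proof -
  obtain k where k: "k \<le> q" "luk v a = real k / real q"
    using luk_LV LV_iff by blast
  show ?thesis
  proof (cases "luk v a \<in> {0, 1}")
    case True
    then have "k = 0 \<or> k = q"
      using k q_pos by auto
    then have "luk v (Mult_mod q 0 a) = 0"
      using luk_Mult_mod[OF k(2,1), of 0] by auto
    then show ?thesis
      using True Min_mult_mod_le[of 0 "q - 2" a] luk_unit[of "Nonbool q a"]
      by (simp add: Nonbool_def)
  next
    case False
    then have k0: "0 < k" "k < q"
      using k q_pos by (auto simp: le_less)
    obtain m where m: "0 < m" "m < q" "m * k mod q = 1"
      using prime_mod_inverse[OF prime_q k0] by blast
    have "luk v (Mult_mod q (m - 1) a) = 1 / real q"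
      using luk_Mult_mod[OF k(2,1), of "m - 1"] m by simp
    then have "luk v (Nonbool q a) \<le> 1 / real q"
      using Min_mult_mod_le[of "m - 1" "q - 2" a] m by (simp add: Nonbool_def)
    moreover have "1 / real q \<le> luk v (Mult_mod q i a)" if "i \<le> q - 2" for i
    proof -
      have "\<not> q dvd Suc i" "\<not> q dvd k"
        using that k0 prime_gt_1_nat[OF prime_q] by (auto dest: dvd_imp_le)
      then have "\<not> q dvd Suc i * k"
        using prime_q prime_dvd_mult_iff by blast
      then have "1 \<le> Suc i * k mod q"
        by (simp add: dvd_eq_mod_eq_0 Suc_le_eq)
      then show ?thesis
        using luk_Mult_mod[OF k(2,1), of i] q_pos by (simp add: divide_right_mono)
    qed
    then have "1 / real q \<le> luk v (Nonbool q a)"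
      unfolding Nonbool_def by (rule Min_mult_mod_ge)
    ultimately show ?thesis
      using False by simp
  qed
qed

lemma luk_Scaled_nonbool:
  "m \<le> q \<Longrightarrow> luk v (Scaled_nonbool q m a) = (if luk v a \<in> {0, 1} then 0 else real m / real q)"
  by (auto simp: Scaled_nonbool_def luk_nmul luk_Nonbool min_def field_simps)

lemma luk_Switch:
  assumes "m \<le> q" "b \<in> {0, 1}"
  shows "luk v (Switch q m b a) = (if luk v a \<in> {0, 1} then b else real m / real q)"
proof -
  have "real m / real q \<le> 1"
    using assms q_pos by simp
  then show ?thesis
    using assms by (auto simp: Switch_def luk_Vee luk_Scaled_nonbool luk_Crisp)
qed

lemma luk_Some_nonbool:
  "luk v (Some_nonbool q xs) = (if \<exists>x\<in>set xs. v x \<notin> {0, 1} then 1 / real q else 0)"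
  by (induction xs) (auto simp: luk_Vee luk_Nonbool)

end

section \<open>Compactness of classical propositional logic\<close>

definition bool_sat :: "fm set \<Rightarrow> bool" where
  "bool_sat \<Gamma> \<longleftrightarrow> (\<exists>w. luk_val 1 w \<and> (\<forall>\<gamma>\<in>\<Gamma>. luk w \<gamma> = 1))"

definition fin_sat_ext :: "fm set \<Rightarrow> nat \<Rightarrow> (nat \<Rightarrow> real) \<Rightarrow> bool" where
  "fin_sat_ext \<Gamma> n b \<longleftrightarrow> (\<forall>\<Gamma>0. \<Gamma>0 \<subseteq> \<Gamma> \<longrightarrow> finite \<Gamma>0 \<longrightarrow>
     (\<exists>w. luk_val 1 w \<and> (\<forall>i<n. w i = b i) \<and> (\<forall>\<gamma>\<in>\<Gamma>0. luk w \<gamma> = 1)))"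

lemma fin_sat_ext_Suc:
  assumes "fin_sat_ext \<Gamma> n b"
  shows "fin_sat_ext \<Gamma> (Suc n) (b(n := 1)) \<or> fin_sat_ext \<Gamma> (Suc n) (b(n := 0))"
proof (rule ccontr)
  assume "\<not> ?thesis"
  then obtain \<Gamma>1 \<Gamma>0 where fin: "\<Gamma>1 \<subseteq> \<Gamma>" "finite \<Gamma>1" "\<Gamma>0 \<subseteq> \<Gamma>" "finite \<Gamma>0"
    and no_model1: "\<not> (\<exists>w. luk_val 1 w \<and> (\<forall>i<Suc n. w i = (b(n := 1)) i) \<and> (\<forall>\<gamma>\<in>\<Gamma>1. luk w \<gamma> = 1))"
    and no_model0: "\<not> (\<exists>w. luk_val 1 w \<and> (\<forall>i<Suc n. w i = (b(n := 0)) i) \<and> (\<forall>\<gamma>\<in>\<Gamma>0. luk w \<gamma> = 1))"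
    unfolding fin_sat_ext_def by blast
  obtain w where w: "luk_val 1 w" "\<forall>i<n. w i = b i" "\<forall>\<gamma>\<in>\<Gamma>1 \<union> \<Gamma>0. luk w \<gamma> = 1"
    using assms fin unfolding fin_sat_ext_def by (metis finite_UnI le_sup_iff)
  moreover have "w n \<in> {0, 1}"
    using w(1) luk_val_bool_iff by blast
  ultimately show False
    using no_model1 no_model0 by (auto simp: less_Suc_eq)
qed

primrec bool_prefix :: "fm set \<Rightarrow> nat \<Rightarrow> nat \<Rightarrow> real" where
  "bool_prefix \<Gamma> 0 = (\<lambda>_. 0)"
| "bool_prefix \<Gamma> (Suc n) =
     (if fin_sat_ext \<Gamma> (Suc n) ((bool_prefix \<Gamma> n)(n := 1))
      then (bool_prefix \<Gamma> n)(n := 1) else (bool_prefix \<Gamma> n)(n := 0))"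

lemma fin_sat_ext_bool_prefix:
  assumes "\<And>\<Gamma>0. \<Gamma>0 \<subseteq> \<Gamma> \<Longrightarrow> finite \<Gamma>0 \<Longrightarrow> bool_sat \<Gamma>0"
  shows "fin_sat_ext \<Gamma> n (bool_prefix \<Gamma> n)"
proof (induction n)
  case 0
  then show ?case
    using assms by (simp add: fin_sat_ext_def bool_sat_def)
next
  case (Suc n)
  then show ?case
    using fin_sat_ext_Suc by auto
qed

lemma bool_prefix_bool: "bool_prefix \<Gamma> n i \<in> {0, 1}"
  by (induction n) auto

lemma bool_prefix_stable: "i < n \<Longrightarrow> bool_prefix \<Gamma> n i = bool_prefix \<Gamma> (Suc i) i"
  by (induction n) (auto simp: less_Suc_eq)

theorem bool_compactness:
  assumes "\<And>\<Gamma>0. \<Gamma>0 \<subseteq> \<Gamma> \<Longrightarrow> finite \<Gamma>0 \<Longrightarrow> bool_sat \<Gamma>0"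
  shows "bool_sat \<Gamma>"
proof -
  define w where "w i = bool_prefix \<Gamma> (Suc i) i" for i
  have "luk w \<gamma> = 1" if "\<gamma> \<in> \<Gamma>" for \<gamma>
  proof -
    have "{\<gamma>} \<subseteq> \<Gamma>" "finite {\<gamma>}"
      using that by auto
    then obtain u where "\<forall>i<var_bound \<gamma>. u i = bool_prefix \<Gamma> (var_bound \<gamma>) i" "luk u \<gamma> = 1"
      using fin_sat_ext_bool_prefix[OF assms, where n = "var_bound \<gamma>"]
      unfolding fin_sat_ext_def by blast
    then show ?thesis
      using luk_cong[of \<gamma> w u] bool_prefix_stable by (simp add: w_def)
  qed
  moreover have "luk_val 1 w"
    using bool_prefix_bool luk_val_bool_iff by (simp add: w_def)
  ultimately show ?thesis
    unfolding bool_sat_def by blast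
qed

section \<open>Consequence relations generated by a rule\<close>

definition validates :: "(fm set \<Rightarrow> fm \<Rightarrow> bool) \<Rightarrow> fm list \<Rightarrow> fm \<Rightarrow> bool" where
  "validates C p c \<longleftrightarrow> (\<forall>\<sigma>. C (subst \<sigma> ` set p) (subst \<sigma> c))"

lemma least_ext_iff:
  "least_ext R p c \<Gamma> \<phi> \<longleftrightarrow> (\<forall>C. cons_rel C \<longrightarrow> R \<le> C \<longrightarrow> validates C p c \<longrightarrow> C \<Gamma> \<phi>)"
  by (simp add: least_ext_def validates_def le_fun_def)

lemma cons_rel_refl: "cons_rel C \<Longrightarrow> \<phi> \<in> \<Gamma> \<Longrightarrow> C \<Gamma> \<phi>"
  unfolding cons_rel_def by blast

lemma cons_rel_mono: "cons_rel C \<Longrightarrow> C \<Gamma> \<phi> \<Longrightarrow> \<Gamma> \<subseteq> \<Delta> \<Longrightarrow> C \<Delta> \<phi>"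
  unfolding cons_rel_def by blast

lemma cons_rel_cut: "cons_rel C \<Longrightarrow> (\<And>\<delta>. \<delta> \<in> \<Delta> \<Longrightarrow> C \<Gamma> \<delta>) \<Longrightarrow> C (\<Gamma> \<union> \<Delta>) \<phi> \<Longrightarrow> C \<Gamma> \<phi>"
  unfolding cons_rel_def by (meson Ball_def)

lemma cons_rel_mcons: "cons_rel (mcons M)"
  unfolding cons_rel_def mcons_def by auto

lemma least_ext_refl: "\<phi> \<in> \<Gamma> \<Longrightarrow> least_ext R p c \<Gamma> \<phi>"
  by (simp add: least_ext_iff cons_rel_refl)

lemma least_ext_mono: "least_ext R p c \<Gamma> \<phi> \<Longrightarrow> \<Gamma> \<subseteq> \<Delta> \<Longrightarrow> least_ext R p c \<Delta> \<phi>"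
  unfolding least_ext_iff by (meson cons_rel_mono)

lemma least_ext_cut:
  assumes "\<And>\<delta>. \<delta> \<in> \<Delta> \<Longrightarrow> least_ext R p c \<Gamma> \<delta>" "least_ext R p c (\<Gamma> \<union> \<Delta>) \<phi>"
  shows "least_ext R p c \<Gamma> \<phi>"
  unfolding least_ext_iff
proof (intro allI impI)
  fix C
  assume C: "cons_rel C" "R \<le> C" "validates C p c"
  have "C \<Gamma> \<delta>" if "\<delta> \<in> \<Delta>" for \<delta>
    using assms(1)[OF that, unfolded least_ext_iff, rule_format, OF C] .
  moreover have "C (\<Gamma> \<union> \<Delta>) \<phi>"
    using assms(2)[unfolded least_ext_iff, rule_format, OF C] .
  ultimately show "C \<Gamma> \<phi>"
    by (rule cons_rel_cut[OF C(1)])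
qed

lemma le_least_ext: "R \<le> least_ext R p c"
  by (simp add: le_fun_def least_ext_def)

lemma validates_least_ext: "validates (least_ext R p c) p c"
  by (simp add: least_ext_def validates_def)

lemma least_ext_le: "cons_rel C \<Longrightarrow> R \<le> C \<Longrightarrow> validates C p c \<Longrightarrow> least_ext R p c \<le> C"
  unfolding least_ext_def validates_def le_fun_def by simp blast

lemma cons_rel_least_ext: "cons_rel (least_ext R p c)"
  unfolding cons_rel_def using least_ext_refl least_ext_mono least_ext_cut by (metis (no_types))

lemma least_ext_eqI:
  assumes "cons_rel S" "R \<le> S" "validates S p c"
    and "\<And>C. cons_rel C \<Longrightarrow> R \<le> C \<Longrightarrow> validates C p c \<Longrightarrow> S \<le> C"
  shows "least_ext R p c = S"
proof (rule antisym)
  show "least_ext R p c \<le> S"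
    using assms(1-3) by (rule least_ext_le)
  show "S \<le> least_ext R p c"
    using assms(4) cons_rel_least_ext le_least_ext validates_least_ext .
qed

definition closed_matrix :: "'a matrix \<Rightarrow> bool" where
  "closed_matrix M \<longleftrightarrow>
     (\<forall>x\<in>car M. mneg M x \<in> car M) \<and> (\<forall>x\<in>car M. \<forall>y\<in>car M. mimp M x y \<in> car M)"

lemma eval_car: "closed_matrix M \<Longrightarrow> (\<And>n. v n \<in> car M) \<Longrightarrow> eval M v \<phi> \<in> car M"
  by (induction \<phi>) (auto simp: closed_matrix_def)

lemma eval_subst: "eval M v (subst \<sigma> \<phi>) = eval M (\<lambda>n. eval M v (\<sigma> n)) \<phi>"
  by (induction \<phi>) auto

lemma validates_mcons:
  assumes "closed_matrix M" "mcons M (set p) c"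
  shows "validates (mcons M) p c"
  unfolding validates_def mcons_def
proof (intro allI impI)
  fix \<sigma> v
  assume "\<forall>n. v n \<in> car M" "\<forall>\<gamma>\<in>subst \<sigma> ` set p. eval M v \<gamma> \<in> des M"
  moreover from this have "\<forall>n. eval M v (\<sigma> n) \<in> car M"
    using assms(1) eval_car by blast
  ultimately show "eval M v (subst \<sigma> c) \<in> des M"
    using assms(2) by (simp add: mcons_def eval_subst)
qed

lemma strongly_maximal_mconsI:
  assumes "mcons M1 < mcons M2" "closed_matrix M2"
    and "\<And>p c C. mcons M2 (set p) c \<Longrightarrow> \<not> mcons M1 (set p) c \<Longrightarrow>
      cons_rel C \<Longrightarrow> mcons M1 \<le> C \<Longrightarrow> validates C p c \<Longrightarrow> mcons M2 \<le> C"
  shows "strongly_maximal (mcons M1) (mcons M2)"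
  unfolding strongly_maximal_def
proof (intro conjI allI impI)
  fix p c
  assume "mcons M2 (set p) c" "\<not> mcons M1 (set p) c"
  then show "least_ext (mcons M1) p c = mcons M2"
    using assms less_imp_le[OF assms(1)]
    by (intro least_ext_eqI cons_rel_mcons validates_mcons) auto
qed (rule assms(1))

section \<open>The matrices L, Lbar and CPL\<close>

lemma mcons_CPL_iff:
  "mcons CPL \<Gamma> \<phi> \<longleftrightarrow> (\<forall>w. luk_val 1 w \<longrightarrow> (\<forall>\<gamma>\<in>\<Gamma>. luk w \<gamma> = 1) \<longrightarrow> luk w \<phi> = 1)"
  unfolding mcons_def eval_CPL luk_val_bool_iff by (simp add: CPL_def LV_1 del: One_nat_def)

lemma mcons_Lm_iff:
  assumes "0 < q"
  shows "mcons (Lm j q) \<Gamma> \<phi> \<longleftrightarrow> (\<forall>v. luk_val q v \<longrightarrow>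
    (\<forall>\<gamma>\<in>\<Gamma>. real j / real q \<le> luk v \<gamma>) \<longrightarrow> real j / real q \<le> luk v \<phi>)"
  unfolding mcons_def eval_Lm using assms luk_val.luk_LV by (auto simp: Lm_def luk_val_iff)

lemma mcons_Lbar_iff:
  assumes "0 < q"
  shows "mcons (Lbar j q) \<Gamma> \<phi> \<longleftrightarrow> (\<forall>v w. luk_val q v \<longrightarrow> luk_val 1 w \<longrightarrow>
    (\<forall>\<gamma>\<in>\<Gamma>. real j / real q \<le> luk v \<gamma> \<and> luk w \<gamma> = 1) \<longrightarrow>
    real j / real q \<le> luk v \<phi> \<and> luk w \<phi> = 1)"
proof -
  have car: "(\<forall>n. V n \<in> car (Lbar j q)) \<longleftrightarrow> luk_val q (fst \<circ> V) \<and> luk_val 1 (snd \<circ> V)" for V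
    using assms by (auto simp: luk_val_iff Lbar_def mem_Times_iff)
  have des: "eval (Lbar j q) V \<psi> \<in> des (Lbar j q) \<longleftrightarrow>
      real j / real q \<le> luk (fst \<circ> V) \<psi> \<and> luk (snd \<circ> V) \<psi> = 1"
    if "\<forall>n. V n \<in> car (Lbar j q)" for V \<psi>
    using that car luk_val.luk_LV unfolding eval_Lbar by (auto simp: Lbar_def)
  show ?thesis
    unfolding mcons_def
  proof (intro iffI allI impI)
    fix v w :: "nat \<Rightarrow> real"
    assume H: "\<forall>V. (\<forall>n. V n \<in> car (Lbar j q)) \<longrightarrow>
        (\<forall>\<gamma>\<in>\<Gamma>. eval (Lbar j q) V \<gamma> \<in> des (Lbar j q)) \<longrightarrow> eval (Lbar j q) V \<phi> \<in> des (Lbar j q)"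
      and vw: "luk_val q v" "luk_val 1 w"
      and prem: "\<forall>\<gamma>\<in>\<Gamma>. real j / real q \<le> luk v \<gamma> \<and> luk w \<gamma> = 1"
    define V where "V n = (v n, w n)" for n
    have V: "fst \<circ> V = v" "snd \<circ> V = w"
      by (auto simp: V_def)
    then have carV: "\<forall>n. V n \<in> car (Lbar j q)"
      using car vw by simp
    show "real j / real q \<le> luk v \<phi> \<and> luk w \<phi> = 1"
      using H[THEN spec, of V] carV prem by (simp add: des[OF carV] V)
  next
    fix V
    assume H: "\<forall>v w. luk_val q v \<longrightarrow> luk_val 1 w \<longrightarrow>
        (\<forall>\<gamma>\<in>\<Gamma>. real j / real q \<le> luk v \<gamma> \<and> luk w \<gamma> = 1) \<longrightarrow>
        real j / real q \<le> luk v \<phi> \<and> luk w \<phi> = 1"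
      and carV: "\<forall>n. V n \<in> car (Lbar j q)"
      and prem: "\<forall>\<gamma>\<in>\<Gamma>. eval (Lbar j q) V \<gamma> \<in> des (Lbar j q)"
    show "eval (Lbar j q) V \<phi> \<in> des (Lbar j q)"
      using H[rule_format, of "fst \<circ> V" "snd \<circ> V"] carV prem by (simp add: des[OF carV] car)
  qed
qed

lemma closed_matrix_CPL: "closed_matrix CPL"
  using luk_neg_LV[of 1] luk_imp_LV[of 1] by (simp add: closed_matrix_def CPL_def)

lemma closed_matrix_Lbar: "0 < q \<Longrightarrow> closed_matrix (Lbar j q)"
  using luk_neg_LV luk_imp_LV luk_neg_LV[of 1] luk_imp_LV[of 1]
  by (auto simp: closed_matrix_def Lbar_def)

context
  fixes q j :: nat
  assumes prime_q: "prime q" and j_pos: "0 < j" and j_le_q: "j \<le> q"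
begin

abbreviation thr :: real where "thr \<equiv> real j / real q"

lemma q_pos: "0 < q"
  using prime_q prime_gt_0_nat by blast

lemma thr_pos: "0 < thr" and thr_le_1: "thr \<le> 1"
  using q_pos j_pos j_le_q by auto

lemma thr_le_bool_iff: "x \<in> {0, 1} \<Longrightarrow> thr \<le> x \<longleftrightarrow> x = 1"
  using thr_pos thr_le_1 by auto

lemma luk_val_primeI: "luk_val q v \<Longrightarrow> luk_val_prime q v"
  by (simp add: luk_val_prime_def luk_val_prime_axioms_def prime_q)

lemma luk_val_inverse: "luk_val q (\<lambda>_. 1 / real q)"
  using q_pos inverse_in_LV by (simp add: luk_val_iff)

lemma thr_le_Crisp_iff: "luk_val q v \<Longrightarrow> thr \<le> luk v (Crisp q a) \<longleftrightarrow> luk v a \<in> {0, 1}"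
  using thr_pos thr_le_1 by (simp add: luk_val.luk_Crisp)

lemma luk_val_bool_of_Crisp:
  assumes "luk_val q v" "\<And>y. thr \<le> luk v (Crisp q (Var y))"
  shows "luk_val 1 v"
proof -
  have "v y \<in> {0, 1}" for y
    using assms thr_le_Crisp_iff[OF assms(1), of "Var y"] by simp
  then show ?thesis
    using luk_val_bool_iff by blast
qed

lemma luk_Contra_bool: "luk_val 1 w \<Longrightarrow> luk w (Contra j a) = 0"
  using luk_val.luk_Contra[of 1 w j a] luk_val_bool[of w a] j_pos by auto

lemma nonbool_of_thr_le_Contra:
  "luk_val q v \<Longrightarrow> thr \<le> luk v (Contra j a) \<Longrightarrow> luk v a \<notin> {0, 1}"
  using luk_val.luk_Contra[of q v j a] j_pos thr_pos by auto

lemma thr_le_Contra_inverse: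
  assumes "luk_val q v" "luk v a = 1 / real q"
  shows "thr \<le> luk v (Contra j a)"
proof -
  have "1 / real q \<le> 1 - 1 / real q"
    using prime_gt_1_nat[OF prime_q] by (simp add: field_simps)
  then show ?thesis
    using luk_val.luk_Contra[OF assms(1), of j a] assms(2) j_pos thr_le_1 by simp
qed

lemma Lm_le_Lbar: "mcons (Lm j q) \<le> mcons (Lbar j q)"
proof (rule predicate2I)
  fix \<Gamma> \<phi>
  assume Lm: "mcons (Lm j q) \<Gamma> \<phi>"
  show "mcons (Lbar j q) \<Gamma> \<phi>"
    unfolding mcons_Lbar_iff[OF q_pos]
  proof (intro allI impI conjI)
    fix v w
    assume v: "luk_val q v" and w: "luk_val 1 w"
      and prem: "\<forall>\<gamma>\<in>\<Gamma>. thr \<le> luk v \<gamma> \<and> luk w \<gamma> = 1"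
    show "thr \<le> luk v \<phi>"
      using Lm v prem by (simp add: mcons_Lm_iff[OF q_pos])
    have "thr \<le> luk w \<phi>"
      using Lm luk_val_bool_mono[OF w q_pos] prem thr_le_1 by (simp add: mcons_Lm_iff[OF q_pos])
    then show "luk w \<phi> = 1"
      using thr_le_bool_iff luk_val_bool[OF w] by blast
  qed
qed

lemma Lbar_le_CPL: "mcons (Lbar j q) \<le> mcons CPL"
proof (rule predicate2I)
  fix \<Gamma> \<phi>
  assume Lbar: "mcons (Lbar j q) \<Gamma> \<phi>"
  show "mcons CPL \<Gamma> \<phi>"
    unfolding mcons_CPL_iff
  proof (intro allI impI)
    fix w
    assume w: "luk_val 1 w" and prem: "\<forall>\<gamma>\<in>\<Gamma>. luk w \<gamma> = 1"
    then show "luk w \<phi> = 1"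
      using Lbar[unfolded mcons_Lbar_iff[OF q_pos], rule_format, OF luk_val_bool_mono[OF w q_pos] w]
        thr_le_1 by simp
  qed
qed

lemma Lm_of_Lbar_bool_sat: "mcons (Lbar j q) \<Gamma> \<phi> \<Longrightarrow> bool_sat \<Gamma> \<Longrightarrow> mcons (Lm j q) \<Gamma> \<phi>"
  unfolding mcons_Lbar_iff[OF q_pos] mcons_Lm_iff[OF q_pos] bool_sat_def by blast

lemma Lbar_Contra_explosive: "mcons (Lbar j q) {Contra j \<theta>} \<psi>"
  using luk_Contra_bool by (simp add: mcons_Lbar_iff[OF q_pos])

lemma Lm_Contra_of_unsat:
  assumes "finite \<Gamma>0" "\<not> bool_sat \<Gamma>0"
  obtains \<theta> where "mcons (Lm j q) \<Gamma>0 (Contra j \<theta>)"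
proof
  define N where "N = Max (insert 0 (var_bound ` \<Gamma>0))"
  have N: "var_bound \<gamma> \<le> N" if "\<gamma> \<in> \<Gamma>0" for \<gamma>
    using assms(1) that by (simp add: N_def)
  show "mcons (Lm j q) \<Gamma>0 (Contra j (Some_nonbool q [0..<N]))"
    unfolding mcons_Lm_iff[OF q_pos]
  proof (intro allI impI)
    fix v
    assume v: "luk_val q v" and models: "\<forall>\<gamma>\<in>\<Gamma>0. thr \<le> luk v \<gamma>"
    have "\<exists>x<N. v x \<notin> {0, 1}"
    proof (rule ccontr)
      assume all_bool: "\<not> (\<exists>x<N. v x \<notin> {0, 1})"
      define w where "w n = (if n < N then v n else 0)" for n
      have w: "luk_val 1 w"
        using all_bool luk_val_bool_iff by (auto simp: w_def)
      have "luk w \<gamma> = 1" if "\<gamma> \<in> \<Gamma>0" for \<gamma>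
      proof -
        have "luk w \<gamma> = luk v \<gamma>"
          using N[OF that] by (intro luk_cong) (auto simp: w_def)
        then show ?thesis
          using models that thr_le_bool_iff luk_val_bool[OF w] by metis
      qed
      then show False
        using assms(2) w unfolding bool_sat_def by blast
    qed
    then have "luk v (Some_nonbool q [0..<N]) = 1 / real q"
      using luk_val_prime.luk_Some_nonbool[OF luk_val_primeI[OF v]] by auto
    then show "thr \<le> luk v (Contra j (Some_nonbool q [0..<N]))"
      by (rule thr_le_Contra_inverse[OF v])
  qed
qed

lemma Lm_Crisp_of_unsat:
  assumes "\<not> bool_sat \<Gamma>"
  shows "mcons (Lm j q) (\<Gamma> \<union> range (\<lambda>y. Crisp q (Var y))) \<phi>"
  unfolding mcons_Lm_iff[OF q_pos]
proof (intro allI impI)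
  fix v
  assume v: "luk_val q v" and models: "\<forall>\<gamma>\<in>\<Gamma> \<union> range (\<lambda>y. Crisp q (Var y)). thr \<le> luk v \<gamma>"
  then have bool: "luk_val 1 v"
    using luk_val_bool_of_Crisp by blast
  then have "\<forall>\<gamma>\<in>\<Gamma>. luk v \<gamma> = 1"
    using models thr_le_bool_iff luk_val_bool by blast
  then show "thr \<le> luk v \<phi>"
    using assms bool unfolding bool_sat_def by blast
qed

lemma Lbar_Crisp_of_CPL:
  assumes "mcons CPL \<Gamma> \<phi>"
  shows "mcons (Lbar j q) (\<Gamma> \<union> range (\<lambda>y. Crisp q (Var y))) \<phi>"
  unfolding mcons_Lbar_iff[OF q_pos]
proof (intro allI impI conjI)
  fix v w
  assume v: "luk_val q v" and w: "luk_val 1 w"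
    and models: "\<forall>\<gamma>\<in>\<Gamma> \<union> range (\<lambda>y. Crisp q (Var y)). thr \<le> luk v \<gamma> \<and> luk w \<gamma> = 1"
  then have bool: "luk_val 1 v"
    using luk_val_bool_of_Crisp by blast
  then have "\<forall>\<gamma>\<in>\<Gamma>. luk v \<gamma> = 1"
    using models thr_le_bool_iff luk_val_bool by blast
  then show "thr \<le> luk v \<phi>"
    using assms bool thr_le_1 unfolding mcons_CPL_iff by simp
  show "luk w \<phi> = 1"
    using assms w models unfolding mcons_CPL_iff by simp
qed

lemma Lbar_le_of_Contra_rule:
  assumes C: "cons_rel C" "mcons (Lm j q) \<le> C"
    and rule: "\<And>\<theta> y. C {Contra j \<theta>} (Crisp q (Var y))"
  shows "mcons (Lbar j q) \<le> C"
proof (rule predicate2I)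
  fix \<Gamma> \<phi>
  assume Lbar: "mcons (Lbar j q) \<Gamma> \<phi>"
  show "C \<Gamma> \<phi>"
  proof (cases "bool_sat \<Gamma>")
    case True
    then show ?thesis
      using Lm_of_Lbar_bool_sat[OF Lbar] predicate2D[OF C(2)] by blast
  next
    case False
    then obtain \<Gamma>0 where "\<Gamma>0 \<subseteq> \<Gamma>" "finite \<Gamma>0" "\<not> bool_sat \<Gamma>0"
      using bool_compactness by blast
    then obtain \<theta> where "mcons (Lm j q) \<Gamma>0 (Contra j \<theta>)"
      using Lm_Contra_of_unsat by blast
    then have Contra: "C \<Gamma> (Contra j \<theta>)"
      using predicate2D[OF C(2)] cons_rel_mono[OF C(1)] \<open>\<Gamma>0 \<subseteq> \<Gamma>\<close> by blast
    have crisp: "C \<Gamma> (Crisp q (Var y))" for y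
    proof (rule cons_rel_cut[OF C(1)])
      show "C (\<Gamma> \<union> {Contra j \<theta>}) (Crisp q (Var y))"
        using cons_rel_mono[OF C(1) rule] by blast
    qed (use Contra in simp)
    have "C (\<Gamma> \<union> range (\<lambda>y. Crisp q (Var y))) \<phi>"
      using Lm_Crisp_of_unsat[OF False] predicate2D[OF C(2)] by blast
    then show ?thesis
      by (rule cons_rel_cut[OF C(1), rotated]) (use crisp in auto)
  qed
qed

lemma CPL_le_of_Crisp:
  assumes C: "cons_rel C" "mcons (Lbar j q) \<le> C"
    and crisp: "\<And>y. C {} (Crisp q (Var y))"
  shows "mcons CPL \<le> C"
proof (rule predicate2I)
  fix \<Gamma> \<phi>
  assume "mcons CPL \<Gamma> \<phi>"
  then have "C (\<Gamma> \<union> range (\<lambda>y. Crisp q (Var y))) \<phi>"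
    using Lbar_Crisp_of_CPL predicate2D[OF C(2)] by blast
  then show "C \<Gamma> \<phi>"
    by (rule cons_rel_cut[OF C(1), rotated]) (use cons_rel_mono[OF C(1) crisp] in auto)
qed

lemma Lbar_lt_CPL: "mcons (Lbar j q) < mcons CPL"
proof -
  have "mcons CPL {} (Crisp q (Var 0))"
    unfolding mcons_CPL_iff
  proof (intro allI impI)
    fix w
    assume w: "luk_val 1 w"
    show "luk w (Crisp q (Var 0)) = 1"
      using luk_val.luk_Crisp[OF luk_val_bool_mono[OF w q_pos]] luk_val_bool[OF w, of "Var 0"] by simp
  qed
  moreover have "\<not> mcons (Lbar j q) {} (Crisp q (Var 0))"
  proof
    assume "mcons (Lbar j q) {} (Crisp q (Var 0))"
    then have "thr \<le> luk (\<lambda>_. 1 / real q) (Crisp q (Var 0))"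
      using luk_val_inverse luk_val_zero unfolding mcons_Lbar_iff[OF q_pos] by blast
    then show False
      using thr_le_Crisp_iff[OF luk_val_inverse] prime_gt_1_nat[OF prime_q] by simp
  qed
  ultimately show ?thesis
    using Lbar_le_CPL by (auto simp: less_le)
qed

lemma Lm_lt_Lbar: "mcons (Lm j q) < mcons (Lbar j q)"
proof -
  have "\<not> mcons (Lm j q) {Contra j (Var 0)} (Crisp q (Var 1))"
  proof
    assume "mcons (Lm j q) {Contra j (Var 0)} (Crisp q (Var 1))"
    then have "thr \<le> luk (\<lambda>_. 1 / real q) (Crisp q (Var 1))"
      using luk_val_inverse thr_le_Contra_inverse[OF luk_val_inverse]
      unfolding mcons_Lm_iff[OF q_pos] by simp
    then show False
      using thr_le_Crisp_iff[OF luk_val_inverse] prime_gt_1_nat[OF prime_q] by simp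
  qed
  then show ?thesis
    using Lm_le_Lbar Lbar_Contra_explosive by (auto simp: less_le)
qed

section \<open>Strong maximality\<close>

lemma Crisp_of_rule_in_CPL_not_Lbar:
  assumes C: "cons_rel C" "mcons (Lbar j q) \<le> C" "validates C p c"
    and valid: "mcons CPL (set p) c" and invalid: "\<not> mcons (Lbar j q) (set p) c"
  shows "C {} (Crisp q (Var y))"
proof -
  obtain v w where v: "luk_val q v" and w: "luk_val 1 w"
    and prem: "\<forall>\<gamma>\<in>set p. thr \<le> luk v \<gamma> \<and> luk w \<gamma> = 1"
    and concl: "\<not> (thr \<le> luk v c \<and> luk w c = 1)"
    using invalid unfolding mcons_Lbar_iff[OF q_pos] by blast
  have "luk w c = 1"
    using valid w prem unfolding mcons_CPL_iff by blast
  with concl have v_concl: "\<not> thr \<le> luk v c"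
    by blast
  obtain m where m: "\<And>x. m x \<le> q" "\<And>x. v x = real (m x) / real q"
    using luk_val.numerators[OF v] by blast
  define \<tau> where "\<tau> x = Switch q (m x) (w x) (Var y)" for x
  have \<tau>: "(\<lambda>x. luk a (\<tau> x)) = (if a y \<in> {0, 1} then w else v)" if a: "luk_val q a" for a
    using luk_val_prime.luk_Switch[OF luk_val_primeI[OF a] m(1)] luk_val_bool_iff w m(2)
    by (auto simp: \<tau>_def fun_eq_iff)
  have "mcons (Lbar j q) {} (subst \<tau> \<delta>)" if "\<delta> \<in> set p" for \<delta>
    unfolding mcons_Lbar_iff[OF q_pos]
  proof (intro allI impI conjI)
    fix a b
    assume a: "luk_val q a" and b: "luk_val 1 b"
    show "thr \<le> luk a (subst \<tau> \<delta>)"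
      using prem that thr_le_1 by (simp add: luk_subst \<tau>[OF a])
    show "luk b (subst \<tau> \<delta>) = 1"
      using prem that luk_val_bool[OF b, of "Var y"]
      by (simp add: luk_subst \<tau>[OF luk_val_bool_mono[OF b q_pos]])
  qed
  then have "C {} \<delta>" if "\<delta> \<in> subst \<tau> ` set p" for \<delta>
    using that predicate2D[OF C(2)] by blast
  moreover have "C (subst \<tau> ` set p) (subst \<tau> c)"
    using C(3) by (simp add: validates_def)
  ultimately have subst_concl: "C {} (subst \<tau> c)"
    using cons_rel_cut[OF C(1), of "subst \<tau> ` set p" "{}"] by simp
  have "mcons (Lm j q) {subst \<tau> c} (Crisp q (Var y))"
    unfolding mcons_Lm_iff[OF q_pos]
  proof (intro allI impI)
    fix a
    assume a: "luk_val q a" and "\<forall>\<gamma>\<in>{subst \<tau> c}. thr \<le> luk a \<gamma>"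
    then have "a y \<in> {0, 1}"
      using v_concl by (auto simp: luk_subst \<tau>[OF a] split: if_splits)
    then show "thr \<le> luk a (Crisp q (Var y))"
      using thr_le_Crisp_iff[OF a] by simp
  qed
  then have "C {subst \<tau> c} (Crisp q (Var y))"
    using predicate2D[OF C(2)] predicate2D[OF Lm_le_Lbar] by blast
  then show ?thesis
    using subst_concl cons_rel_cut[OF C(1), of "{subst \<tau> c}" "{}"] by simp
qed

lemma Crisp_of_rule_not_in_Lm:
  assumes C: "cons_rel C" "mcons (Lm j q) \<le> C" "validates C p c"
    and invalid: "\<not> mcons (Lm j q) (set p) c"
  shows "C {Contra j \<theta>} (Crisp q (Var y))"
proof -
  obtain v where v: "luk_val q v"
    and prem: "\<forall>\<gamma>\<in>set p. thr \<le> luk v \<gamma>" and v_concl: "\<not> thr \<le> luk v c"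
    using invalid unfolding mcons_Lm_iff[OF q_pos] by blast
  obtain m where m: "\<And>x. m x \<le> q" "\<And>x. v x = real (m x) / real q"
    using luk_val.numerators[OF v] by blast
  define \<tau> where "\<tau> x = Switch q (m x) 0 \<theta>" for x
  have \<tau>: "(\<lambda>x. luk a (\<tau> x)) = v" if a: "luk_val q a" and "thr \<le> luk a (Contra j \<theta>)" for a
    using luk_val_prime.luk_Switch[OF luk_val_primeI[OF a] m(1)] nonbool_of_thr_le_Contra[OF that] m(2)
    by (auto simp: \<tau>_def fun_eq_iff)
  have "mcons (Lm j q) {Contra j \<theta>} (subst \<tau> \<delta>)" if "\<delta> \<in> set p" for \<delta>
    using prem that \<tau> by (simp add: mcons_Lm_iff[OF q_pos] luk_subst)
  then have "C {Contra j \<theta>} \<delta>" if "\<delta> \<in> subst \<tau> ` set p" for \<delta>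
    using that predicate2D[OF C(2)] by blast
  moreover have "C ({Contra j \<theta>} \<union> subst \<tau> ` set p) (subst \<tau> c)"
    by (rule cons_rel_mono[OF C(1) C(3)[unfolded validates_def, THEN spec]]) blast
  ultimately have subst_concl: "C {Contra j \<theta>} (subst \<tau> c)"
    by (rule cons_rel_cut[OF C(1)])
  have "mcons (Lm j q) ({Contra j \<theta>} \<union> {subst \<tau> c}) (Crisp q (Var y))"
    unfolding mcons_Lm_iff[OF q_pos]
  proof (intro allI impI)
    fix a
    assume a: "luk_val q a" and models: "\<forall>\<gamma>\<in>{Contra j \<theta>} \<union> {subst \<tau> c}. thr \<le> luk a \<gamma>"
    then have "luk a (subst \<tau> c) = luk v c"
      using \<tau>[OF a] by (simp add: luk_subst)
    then show "thr \<le> luk a (Crisp q (Var y))"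
      using models v_concl by simp
  qed
  then have "C ({Contra j \<theta>} \<union> {subst \<tau> c}) (Crisp q (Var y))"
    using predicate2D[OF C(2)] by blast
  then show ?thesis
    by (rule cons_rel_cut[OF C(1), rotated]) (use subst_concl in simp)
qed

lemma Lbar_strongly_maximal_CPL: "strongly_maximal (mcons (Lbar j q)) (mcons CPL)"
proof (rule strongly_maximal_mconsI[OF Lbar_lt_CPL closed_matrix_CPL])
  fix p c C
  assume "mcons CPL (set p) c" "\<not> mcons (Lbar j q) (set p) c"
    and C: "cons_rel C" "mcons (Lbar j q) \<le> C" "validates C p c"
  then show "mcons CPL \<le> C"
    using CPL_le_of_Crisp Crisp_of_rule_in_CPL_not_Lbar by blast
qed

lemma Lm_strongly_maximal_Lbar: "strongly_maximal (mcons (Lm j q)) (mcons (Lbar j q))"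
proof (rule strongly_maximal_mconsI[OF Lm_lt_Lbar closed_matrix_Lbar[OF q_pos]])
  fix p c C
  assume "\<not> mcons (Lm j q) (set p) c"
    and C: "cons_rel C" "mcons (Lm j q) \<le> C" "validates C p c"
  then show "mcons (Lbar j q) \<le> C"
    using Lbar_le_of_Contra_rule Crisp_of_rule_not_in_Lm by blast
qed

lemma Lbar_eq_least_ext:
  "mcons (Lbar j q) = least_ext (mcons (Lm j q)) [Contra j (Var 0)] (Crisp q (Var 1))"
proof (rule sym, rule least_ext_eqI[OF cons_rel_mcons Lm_le_Lbar])
  show "validates (mcons (Lbar j q)) [Contra j (Var 0)] (Crisp q (Var 1))"
    by (simp add: validates_def subst_Contra Lbar_Contra_explosive)
next
  fix C
  assume C: "cons_rel C" "mcons (Lm j q) \<le> C"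
    and rule: "validates C [Contra j (Var 0)] (Crisp q (Var 1))"
  have "C {Contra j \<theta>} (Crisp q (Var y))" for \<theta> y
    using rule[unfolded validates_def, THEN spec, of "\<lambda>n. if n = 0 then \<theta> else Var y"]
    by (simp add: subst_Contra subst_Crisp)
  then show "mcons (Lbar j q) \<le> C"
    using Lbar_le_of_Contra_rule[OF C] by blast
qed

end

theorem theorem5p7:
  fixes q j :: nat
  assumes "prime q" and "q > 1" and "0 < j" and "j \<le> q"
  shows "strongly_maximal (mcons (Lbar j q)) (mcons CPL) \<and>
         mcons (Lbar j q) =
           least_ext (mcons (Lm j q))
             [nmul j (Wedge (Var 0) (Neg (Var 0)))]
             (npow q (Vee (Var 1) (Neg (Var 1)))) \<and>
         strongly_maximal (mcons (Lm j q)) (mcons (Lbar j q))"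
  using Lbar_strongly_maximal_CPL Lbar_eq_least_ext Lm_strongly_maximal_Lbar assms by blast

end
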